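(* Let $M$ be a left $R$-module which is semi-projective and $\pi$-projective, and let $S = \operatorname{End}_R(M)$ with Jacobson radical $\operatorname{Jac}(S)$. Then $S/\operatorname{Jac}(S)$ is von Neumann regular if and only if for each $f \in S$ the submodule $\operatorname{Im}(f)$ has a weak supplement in $M$.
   Context: Endomorphisms are written on the right of their arguments, so for $s,f\in S$ the product $sf$ means first $s$ then $f$, and $\operatorname{Hom}_R(M,N)$ is a left $S$-module for each submodule $N\subseteq M$ (viewed as a subset of $S$). $M$ is semi-projective if $Sf = \operatorname{Hom}_R(M, \operatorname{Im}(f))$ for every $f \in S$. $M$ is $\pi$-projective if for all submodules $N, L$ of $M$ with $M = N + L$ one has $S = \operatorname{Hom}_R(M,N) + \operatorname{Hom}_R(M,L)$. A submodule $N$ of $M$ is small in $M$ if $N + L \neq M$ for every proper submodule $L$ of $M$. A submodule $L$ of $M$ is a weak supplement of a submodule $N$ if $N + L = M$ and $N \cap L$ is small in $M$. *)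

theory Defs
  imports "HOL-Algebra.Module" "HOL-Algebra.QuotRing"
begin

text \<open>Left modules over an arbitrary (not necessarily commutative) ring R.
  The library locale module requires a commutative ring, so we state the
  same axioms over a ring.\<close>

locale left_module = R?: ring R + M?: abelian_group M
  for R :: "('a, 'c) ring_scheme" and M :: "('a, 'b, 'd) module_scheme" (structure) +
  assumes smult_closed:
      "\<lbrakk>a \<in> carrier R; x \<in> carrier M\<rbrakk> \<Longrightarrow> a \<odot>\<^bsub>M\<^esub> x \<in> carrier M"
    and smult_l_distr:
      "\<lbrakk>a \<in> carrier R; b \<in> carrier R; x \<in> carrier M\<rbrakk> \<Longrightarrow>
      (a \<oplus>\<^bsub>R\<^esub> b) \<odot>\<^bsub>M\<^esub> x = a \<odot>\<^bsub>M\<^esub> x \<oplus>\<^bsub>M\<^esub> b \<odot>\<^bsub>M\<^esub> x"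
    and smult_r_distr:
      "\<lbrakk>a \<in> carrier R; x \<in> carrier M; y \<in> carrier M\<rbrakk> \<Longrightarrow>
      a \<odot>\<^bsub>M\<^esub> (x \<oplus>\<^bsub>M\<^esub> y) = a \<odot>\<^bsub>M\<^esub> x \<oplus>\<^bsub>M\<^esub> a \<odot>\<^bsub>M\<^esub> y"
    and smult_assoc1:
      "\<lbrakk>a \<in> carrier R; b \<in> carrier R; x \<in> carrier M\<rbrakk> \<Longrightarrow>
      (a \<otimes>\<^bsub>R\<^esub> b) \<odot>\<^bsub>M\<^esub> x = a \<odot>\<^bsub>M\<^esub> (b \<odot>\<^bsub>M\<^esub> x)"
    and smult_one:
      "x \<in> carrier M \<Longrightarrow> \<one>\<^bsub>R\<^esub> \<odot>\<^bsub>M\<^esub> x = x"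

definition End_carrier :: "('a, 'c) ring_scheme \<Rightarrow> ('a, 'b, 'd) module_scheme \<Rightarrow> ('b \<Rightarrow> 'b) set"
  where "End_carrier R M = {f.
      (\<forall>x\<in>carrier M. f x \<in> carrier M)
    \<and> (\<forall>x\<in>carrier M. \<forall>y\<in>carrier M. f (x \<oplus>\<^bsub>M\<^esub> y) = f x \<oplus>\<^bsub>M\<^esub> f y)
    \<and> (\<forall>a\<in>carrier R. \<forall>x\<in>carrier M. f (a \<odot>\<^bsub>M\<^esub> x) = a \<odot>\<^bsub>M\<^esub> f x)
    \<and> (\<forall>x. x \<notin> carrier M \<longrightarrow> f x = undefined)}"

text \<open>The endomorphism ring S = End_R(M), endomorphisms written on the right:
  the product s f means first s then f.\<close>

definition End_ring :: "('a, 'c) ring_scheme \<Rightarrow> ('a, 'b, 'd) module_scheme \<Rightarrow> ('b \<Rightarrow> 'b) ring"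
  where "End_ring R M =
    \<lparr>carrier = End_carrier R M,
     mult = (\<lambda>s f. \<lambda>x\<in>carrier M. f (s x)),
     one = (\<lambda>x\<in>carrier M. x),
     zero = (\<lambda>x\<in>carrier M. \<zero>\<^bsub>M\<^esub>),
     add = (\<lambda>f g. \<lambda>x\<in>carrier M. f x \<oplus>\<^bsub>M\<^esub> g x)\<rparr>"

definition left_ideal :: "'s set \<Rightarrow> ('s, 'e) ring_scheme \<Rightarrow> bool"
  where "left_ideal I S \<longleftrightarrow> additive_subgroup I S \<and>
      (\<forall>a\<in>I. \<forall>x\<in>carrier S. x \<otimes>\<^bsub>S\<^esub> a \<in> I)"

definition maximal_left_ideal :: "'s set \<Rightarrow> ('s, 'e) ring_scheme \<Rightarrow> bool"
  where "maximal_left_ideal I S \<longleftrightarrow> left_ideal I S \<and> I \<noteq> carrier S \<and>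
      (\<forall>J. left_ideal J S \<and> I \<subseteq> J \<longrightarrow> J = I \<or> J = carrier S)"

definition jacobson_radical :: "('s, 'e) ring_scheme \<Rightarrow> 's set"
  where "jacobson_radical S = carrier S \<inter> \<Inter>{I. maximal_left_ideal I S}"

definition von_neumann_regular :: "('s, 'e) ring_scheme \<Rightarrow> bool"
  where "von_neumann_regular S \<longleftrightarrow>
      (\<forall>a\<in>carrier S. \<exists>b\<in>carrier S. a \<otimes>\<^bsub>S\<^esub> b \<otimes>\<^bsub>S\<^esub> a = a)"

definition Hom_into :: "('a, 'c) ring_scheme \<Rightarrow> ('a, 'b, 'd) module_scheme \<Rightarrow> 'b set \<Rightarrow> ('b \<Rightarrow> 'b) set"
  where "Hom_into R M N = {f \<in> End_carrier R M. f ` carrier M \<subseteq> N}"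

definition sum_sub :: "('a, 'b, 'd) module_scheme \<Rightarrow> 'b set \<Rightarrow> 'b set \<Rightarrow> 'b set"
  where "sum_sub M N L = {x \<oplus>\<^bsub>M\<^esub> y | x y. x \<in> N \<and> y \<in> L}"

definition semi_projective :: "('a, 'c) ring_scheme \<Rightarrow> ('a, 'b, 'd) module_scheme \<Rightarrow> bool"
  where "semi_projective R M \<longleftrightarrow>
      (\<forall>f\<in>End_carrier R M.
         {s \<otimes>\<^bsub>End_ring R M\<^esub> f | s. s \<in> End_carrier R M} = Hom_into R M (f ` carrier M))"

definition pi_projective :: "('a, 'c) ring_scheme \<Rightarrow> ('a, 'b, 'd) module_scheme \<Rightarrow> bool"
  where "pi_projective R M \<longleftrightarrow>
      (\<forall>N L. submodule N R M \<and> submodule L R M \<and> sum_sub M N L = carrier M \<longrightarrow>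
         End_carrier R M = {g \<oplus>\<^bsub>End_ring R M\<^esub> h | g h. g \<in> Hom_into R M N \<and> h \<in> Hom_into R M L})"

definition small_in :: "('a, 'c) ring_scheme \<Rightarrow> ('a, 'b, 'd) module_scheme \<Rightarrow> 'b set \<Rightarrow> bool"
  where "small_in R M N \<longleftrightarrow> submodule N R M \<and>
      (\<forall>L. submodule L R M \<and> L \<noteq> carrier M \<longrightarrow> sum_sub M N L \<noteq> carrier M)"

definition weak_supplement :: "('a, 'c) ring_scheme \<Rightarrow> ('a, 'b, 'd) module_scheme \<Rightarrow> 'b set \<Rightarrow> 'b set \<Rightarrow> bool"
  where "weak_supplement R M L N \<longleftrightarrow> submodule L R M \<and>
      sum_sub M N L = carrier M \<and> small_in R M (N \<inter> L)"

end

theory Submission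
  imports Defs
begin

text \<open>For S = End(M) one has t \<in> Jac(S) iff 1 - u t is left invertible for all u. Using
  \<pi>-projectivity, a decomposition M = Im t + L lifts to 1 = u t + h with Im h \<subseteq> L; using
  semi-projectivity, surjective endomorphisms are left invertible. Together these show that Jac(S)
  consists exactly of the endomorphisms with small image. If L is a weak supplement of Im f,
  write 1 = s f + h with Im h \<subseteq> L: then f - f s f = f h has image in Im f \<inter> L, hence lies in
  Jac(S). Conversely, if d = f g f - f \<in> Jac(S), then Im(1 - g f) is a weak supplement of Im f,
  since Im f \<inter> Im(1 - g f) \<subseteq> Im d.\<close>

lemma (in abelian_group) minus_eq_iff_eq_add:
  assumes "x \<in> carrier G" "y \<in> carrier G" "z \<in> carrier G"
  shows "x \<ominus> y = z \<longleftrightarrow> x = z \<oplus> y"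
  using assms by (metis a_minus_def add.inv_solve_right')

lemma (in abelian_group) add_minus_cancel_right:
  "x \<in> carrier G \<Longrightarrow> y \<in> carrier G \<Longrightarrow> x \<oplus> y \<ominus> y = x"
  by (simp add: minus_eq_iff_eq_add)

lemma (in abelian_group) add_minus_cancel_left:
  "x \<in> carrier G \<Longrightarrow> y \<in> carrier G \<Longrightarrow> y \<oplus> (x \<ominus> y) = x"
  using minus_eq_iff_eq_add[of x y "x \<ominus> y"] by (simp add: a_comm)

context ring
begin

lemma left_idealI:
  assumes "I \<subseteq> carrier R" "\<zero> \<in> I"
    and "\<And>a b. a \<in> I \<Longrightarrow> b \<in> I \<Longrightarrow> a \<oplus> b \<in> I"
    and "\<And>a x. a \<in> I \<Longrightarrow> x \<in> carrier R \<Longrightarrow> x \<otimes> a \<in> I"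
  shows "left_ideal I R"
  unfolding left_ideal_def additive_subgroup_def
proof (intro conjI ballI subgroup.intro)
  have "\<ominus> a = (\<ominus> \<one>) \<otimes> a" if "a \<in> I" for a
    using that assms(1) by (simp add: l_minus subset_iff)
  then show "inv\<^bsub>add_monoid R\<^esub> a \<in> I" if "a \<in> I" for a
    using that assms(4) by (simp add: a_inv_def[symmetric])
qed (use assms in auto)

lemma left_idealD:
  assumes "left_ideal I R"
  shows "I \<subseteq> carrier R" "\<zero> \<in> I" "\<And>a. a \<in> I \<Longrightarrow> \<ominus> a \<in> I"
    "\<And>a b. a \<in> I \<Longrightarrow> b \<in> I \<Longrightarrow> a \<oplus> b \<in> I"
    "\<And>a x. a \<in> I \<Longrightarrow> x \<in> carrier R \<Longrightarrow> x \<otimes> a \<in> I"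
proof -
  interpret additive_subgroup I R
    using assms by (simp add: left_ideal_def)
  show "I \<subseteq> carrier R" "\<zero> \<in> I" "\<And>a. a \<in> I \<Longrightarrow> \<ominus> a \<in> I"
    "\<And>a b. a \<in> I \<Longrightarrow> b \<in> I \<Longrightarrow> a \<oplus> b \<in> I"
    by (simp_all add: a_subset a_inv_closed a_closed)
  show "\<And>a x. a \<in> I \<Longrightarrow> x \<in> carrier R \<Longrightarrow> x \<otimes> a \<in> I"
    using assms by (simp add: left_ideal_def)
qed

lemma left_ideal_eq_carrier:
  assumes "left_ideal I R" "\<one> \<in> I"
  shows "I = carrier R"
proof
  show "I \<subseteq> carrier R" using left_idealD(1)[OF assms(1)] .
  show "carrier R \<subseteq> I"
    using left_idealD(5)[OF assms] by (metis r_one subsetI)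
qed

lemma left_ideal_sum_principal:
  assumes "left_ideal I R" "t \<in> carrier R"
  shows "left_ideal {i \<oplus> u \<otimes> t | i u. i \<in> I \<and> u \<in> carrier R} R"
proof (rule left_idealI)
  note I = left_idealD[OF assms(1)]
  show "{i \<oplus> u \<otimes> t | i u. i \<in> I \<and> u \<in> carrier R} \<subseteq> carrier R"
    using I(1) assms(2) by auto
  have "\<zero> = \<zero> \<oplus> \<zero> \<otimes> t" using assms(2) by simp
  then show "\<zero> \<in> {i \<oplus> u \<otimes> t | i u. i \<in> I \<and> u \<in> carrier R}"
    using I(2) by blast
  fix a assume "a \<in> {i \<oplus> u \<otimes> t | i u. i \<in> I \<and> u \<in> carrier R}"
  then obtain i u where a: "a = i \<oplus> u \<otimes> t" "i \<in> I" "u \<in> carrier R" by blast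
  have i: "i \<in> carrier R" using a(2) I(1) by blast
  show "x \<otimes> a \<in> {i \<oplus> u \<otimes> t | i u. i \<in> I \<and> u \<in> carrier R}" if "x \<in> carrier R" for x
  proof -
    have "x \<otimes> a = x \<otimes> i \<oplus> (x \<otimes> u) \<otimes> t"
      using a i that assms(2) by algebra
    then show ?thesis using I(5)[OF a(2) that] a(3) that by blast
  qed
  fix b assume "b \<in> {i \<oplus> u \<otimes> t | i u. i \<in> I \<and> u \<in> carrier R}"
  then obtain j v where b: "b = j \<oplus> v \<otimes> t" "j \<in> I" "v \<in> carrier R" by blast
  have j: "j \<in> carrier R" using b(2) I(1) by blast
  have "a \<oplus> b = (i \<oplus> j) \<oplus> (u \<oplus> v) \<otimes> t"
    using a b i j assms(2) by algebra
  then show "a \<oplus> b \<in> {i \<oplus> u \<otimes> t | i u. i \<in> I \<and> u \<in> carrier R}"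
    using I(4)[OF a(2) b(2)] a(3) b(3) by blast
qed

lemma left_ideal_principal:
  assumes "t \<in> carrier R"
  shows "left_ideal {u \<otimes> t | u. u \<in> carrier R} R"
proof (rule left_idealI)
  show "\<zero> \<in> {u \<otimes> t | u. u \<in> carrier R}"
    using assms by (metis (mono_tags, lifting) l_null mem_Collect_eq zero_closed)
  show "x \<otimes> a \<in> {u \<otimes> t | u. u \<in> carrier R}"
    if "a \<in> {u \<otimes> t | u. u \<in> carrier R}" "x \<in> carrier R" for a x
    using that assms by (auto simp: m_assoc[symmetric])
  show "a \<oplus> b \<in> {u \<otimes> t | u. u \<in> carrier R}"
    if "a \<in> {u \<otimes> t | u. u \<in> carrier R}" "b \<in> {u \<otimes> t | u. u \<in> carrier R}" for a b
    using that assms by (auto simp: l_distr[symmetric])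
qed (use assms in auto)

lemma left_ideal_chain_Union:
  assumes "C \<noteq> {}" "\<And>I. I \<in> C \<Longrightarrow> left_ideal I R"
    and "\<And>I J. I \<in> C \<Longrightarrow> J \<in> C \<Longrightarrow> I \<subseteq> J \<or> J \<subseteq> I"
  shows "left_ideal (\<Union>C) R"
proof (rule left_idealI)
  show "\<Union>C \<subseteq> carrier R" using assms(2) left_idealD(1) by blast
  show "\<zero> \<in> \<Union>C" using assms(1,2) left_idealD(2) by blast
  show "x \<otimes> a \<in> \<Union>C" if "a \<in> \<Union>C" "x \<in> carrier R" for a x
    using that assms(2) left_idealD(5) by blast
  show "a \<oplus> b \<in> \<Union>C" if ab: "a \<in> \<Union>C" "b \<in> \<Union>C" for a b
  proof -
    obtain I J where "I \<in> C" "J \<in> C" "a \<in> I" "b \<in> J" using ab by blast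
    then show ?thesis using assms(2,3) left_idealD(4) by (metis UnionI subsetD)
  qed
qed

lemma exists_maximal_left_ideal:
  assumes "left_ideal I R" "\<one> \<notin> I"
  shows "\<exists>Q. maximal_left_ideal Q R \<and> I \<subseteq> Q"
proof -
  let ?A = "{J. left_ideal J R \<and> I \<subseteq> J \<and> \<one> \<notin> J}"
  have "\<exists>Q\<in>?A. \<forall>J\<in>?A. Q \<subseteq> J \<longrightarrow> J = Q"
  proof (rule subset_Zorn_nonempty)
    fix C assume "C \<noteq> {}" "subset.chain ?A C"
    then show "\<Union>C \<in> ?A"
      using left_ideal_chain_Union[of C] unfolding subset_chain_def by blast
  qed (use assms in blast)
  then obtain Q where Q: "Q \<in> ?A" and Qmax: "\<forall>J\<in>?A. Q \<subseteq> J \<longrightarrow> J = Q" by blast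
  have "maximal_left_ideal Q R"
    unfolding maximal_left_ideal_def
  proof (intro conjI allI impI)
    show "left_ideal Q R" "Q \<noteq> carrier R" using Q by auto
    fix J assume J: "left_ideal J R \<and> Q \<subseteq> J"
    show "J = Q \<or> J = carrier R"
    proof (cases "\<one> \<in> J")
      case True
      then show ?thesis using J left_ideal_eq_carrier by blast
    next
      case False
      then show ?thesis using J Q Qmax by blast
    qed
  qed
  then show ?thesis using Q by blast
qed

lemma maximal_left_idealD:
  assumes "maximal_left_ideal Q R"
  shows "left_ideal Q R" "\<one> \<notin> Q"
  using assms left_ideal_eq_carrier unfolding maximal_left_ideal_def by blast+

lemma left_ideal_jacobson_radical: "left_ideal (jacobson_radical R) R"
proof (rule left_idealI)
  note QI = left_idealD[OF maximal_left_idealD(1)]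
  show "jacobson_radical R \<subseteq> carrier R" by (simp add: jacobson_radical_def)
  show "\<zero> \<in> jacobson_radical R" by (auto simp: jacobson_radical_def intro: QI(2))
  show "a \<oplus> b \<in> jacobson_radical R" if "a \<in> jacobson_radical R" "b \<in> jacobson_radical R" for a b
    using that by (auto simp: jacobson_radical_def intro: QI(4))
  show "x \<otimes> a \<in> jacobson_radical R" if "a \<in> jacobson_radical R" "x \<in> carrier R" for a x
    using that by (auto simp: jacobson_radical_def intro: QI(5))
qed

lemma jacobson_radical_imp_left_invertible:
  assumes tJ: "t \<in> jacobson_radical R" and u: "u \<in> carrier R"
  shows "\<exists>v\<in>carrier R. v \<otimes> (\<one> \<ominus> u \<otimes> t) = \<one>"
proof (rule ccontr)
  assume no_inverse: "\<not> ?thesis"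
  have t: "t \<in> carrier R" using tJ by (simp add: jacobson_radical_def)
  let ?P = "{v \<otimes> (\<one> \<ominus> u \<otimes> t) | v. v \<in> carrier R}"
  have w: "\<one> \<ominus> u \<otimes> t \<in> carrier R" using t u by simp
  have "\<one> \<notin> ?P" using no_inverse by (auto simp del: r_one)
  then obtain Q where Q: "maximal_left_ideal Q R" and sub: "?P \<subseteq> Q"
    using exists_maximal_left_ideal[OF left_ideal_principal[OF w]] by blast
  note QI = left_idealD[OF maximal_left_idealD(1)[OF Q]]
  have "\<one> \<otimes> (\<one> \<ominus> u \<otimes> t) \<in> Q" using sub by blast
  then have "\<one> \<ominus> u \<otimes> t \<in> Q" using w by simp
  moreover have "u \<otimes> t \<in> Q"
    using tJ Q QI(5) u by (auto simp: jacobson_radical_def)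
  ultimately have "(\<one> \<ominus> u \<otimes> t) \<oplus> u \<otimes> t \<in> Q" by (rule QI(4))
  moreover have "(\<one> \<ominus> u \<otimes> t) \<oplus> u \<otimes> t = \<one>"
    using t u by algebra
  ultimately show False using maximal_left_idealD(2)[OF Q] by simp
qed

lemma left_invertible_imp_jacobson_radical:
  assumes t: "t \<in> carrier R"
    and inv: "\<And>u. u \<in> carrier R \<Longrightarrow> \<exists>v\<in>carrier R. v \<otimes> (\<one> \<ominus> u \<otimes> t) = \<one>"
  shows "t \<in> jacobson_radical R"
  unfolding jacobson_radical_def
proof (intro IntI InterI CollectI t)
  fix Q assume Q: "Q \<in> {I. maximal_left_ideal I R}"
  then have LQ: "left_ideal Q R"
    and Qmax: "\<And>J. left_ideal J R \<Longrightarrow> Q \<subseteq> J \<Longrightarrow> J = Q \<or> J = carrier R"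
    by (auto simp: maximal_left_ideal_def)
  note QI = left_idealD[OF LQ]
  show "t \<in> Q"
  proof (rule ccontr)
    assume "t \<notin> Q"
    let ?Q' = "{i \<oplus> u \<otimes> t | i u. i \<in> Q \<and> u \<in> carrier R}"
    have "t = \<zero> \<oplus> \<one> \<otimes> t" using t by simp
    then have "t \<in> ?Q'" using QI(2) one_closed by blast
    moreover have "Q \<subseteq> ?Q'"
    proof
      fix q assume q: "q \<in> Q"
      then have "q = q \<oplus> \<zero> \<otimes> t" using QI(1) t by auto
      then show "q \<in> ?Q'" using q by blast
    qed
    ultimately have "?Q' = carrier R"
      using Qmax[OF left_ideal_sum_principal[OF LQ t]] \<open>t \<notin> Q\<close> by blast
    then obtain i u where iu: "\<one> = i \<oplus> u \<otimes> t" "i \<in> Q" "u \<in> carrier R"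
      using one_closed by blast
    have "i \<in> carrier R" using iu(2) QI(1) by blast
    then have "i = \<one> \<ominus> u \<otimes> t"
      unfolding iu(1) using iu(3) t by algebra
    then obtain v where v: "v \<in> carrier R" "v \<otimes> i = \<one>" using inv iu(3) by blast
    have "v \<otimes> i \<in> Q" using QI(5)[OF iu(2) v(1)] .
    then show False using v(2) maximal_left_idealD(2) Q by auto
  qed
qed

lemma jacobson_radical_iff:
  "t \<in> jacobson_radical R \<longleftrightarrow>
     t \<in> carrier R \<and> (\<forall>u\<in>carrier R. \<exists>v\<in>carrier R. v \<otimes> (\<one> \<ominus> u \<otimes> t) = \<one>)"
  using jacobson_radical_imp_left_invertible left_invertible_imp_jacobson_radical
  by (auto simp: jacobson_radical_def)

end

context ideal
begin

lemma quotient_carrier_iff: "A \<in> carrier (R Quot I) \<longleftrightarrow> (\<exists>a\<in>carrier R. A = I +> a)"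
  by (simp add: FactRing_def A_RCOSETS_def')

lemma quotient_mult:
  "a \<in> carrier R \<Longrightarrow> b \<in> carrier R \<Longrightarrow> (I +> a) \<otimes>\<^bsub>R Quot I\<^esub> (I +> b) = I +> (a \<otimes> b)"
  by (simp add: FactRing_def rcoset_mult_add)

lemma rcoset_eq_iff:
  assumes "a \<in> carrier R" "b \<in> carrier R"
  shows "I +> a = I +> b \<longleftrightarrow> a \<ominus> b \<in> I"
proof -
  have "I +> a = I +> b \<longleftrightarrow> a \<in> I +> b"
    using assms a_repr_independence' a_repr_independenceD by metis
  also have "\<dots> \<longleftrightarrow> a \<ominus> b \<in> I"
    by (rule a_rcos_module_minus[OF ring_axioms assms(2,1)])
  finally show ?thesis .
qed

lemma von_neumann_regular_Quot_iff:
  "von_neumann_regular (R Quot I) \<longleftrightarrow> (\<forall>a\<in>carrier R. \<exists>b\<in>carrier R. a \<otimes> b \<otimes> a \<ominus> a \<in> I)"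
proof
  assume vnr: "von_neumann_regular (R Quot I)"
  show "\<forall>a\<in>carrier R. \<exists>b\<in>carrier R. a \<otimes> b \<otimes> a \<ominus> a \<in> I"
  proof
    fix a assume a: "a \<in> carrier R"
    then have "I +> a \<in> carrier (R Quot I)" by (auto simp: quotient_carrier_iff)
    then obtain B where "B \<in> carrier (R Quot I)"
      "(I +> a) \<otimes>\<^bsub>R Quot I\<^esub> B \<otimes>\<^bsub>R Quot I\<^esub> (I +> a) = I +> a"
      using vnr unfolding von_neumann_regular_def by blast
    then obtain b where "b \<in> carrier R" "I +> (a \<otimes> b \<otimes> a) = I +> a"
      using a by (auto simp: quotient_carrier_iff quotient_mult)
    then show "\<exists>b\<in>carrier R. a \<otimes> b \<otimes> a \<ominus> a \<in> I"
      using a by (auto simp: rcoset_eq_iff)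
  qed
next
  assume quasi_inverse: "\<forall>a\<in>carrier R. \<exists>b\<in>carrier R. a \<otimes> b \<otimes> a \<ominus> a \<in> I"
  show "von_neumann_regular (R Quot I)"
    unfolding von_neumann_regular_def
  proof
    fix A assume "A \<in> carrier (R Quot I)"
    then obtain a where a: "a \<in> carrier R" "A = I +> a" by (auto simp: quotient_carrier_iff)
    then obtain b where b: "b \<in> carrier R" "a \<otimes> b \<otimes> a \<ominus> a \<in> I" using quasi_inverse by blast
    show "\<exists>B\<in>carrier (R Quot I). A \<otimes>\<^bsub>R Quot I\<^esub> B \<otimes>\<^bsub>R Quot I\<^esub> A = A"
    proof
      show "I +> b \<in> carrier (R Quot I)" using b by (auto simp: quotient_carrier_iff)
      show "A \<otimes>\<^bsub>R Quot I\<^esub> (I +> b) \<otimes>\<^bsub>R Quot I\<^esub> A = A"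
        using a b by (simp add: quotient_mult rcoset_eq_iff)
    qed
  qed
qed

end

context left_module
begin

abbreviation "E \<equiv> End_carrier R M"
abbreviation "S \<equiv> End_ring R M"

lemma carrier_End_ring [simp]: "carrier S = E"
  by (simp add: End_ring_def)

lemma End_mult_apply [simp]: "x \<in> carrier M \<Longrightarrow> (a \<otimes>\<^bsub>S\<^esub> b) x = b (a x)"
  by (simp add: End_ring_def)

lemma End_add_apply [simp]: "x \<in> carrier M \<Longrightarrow> (a \<oplus>\<^bsub>S\<^esub> b) x = a x \<oplus> b x"
  by (simp add: End_ring_def)

lemma End_one_apply [simp]: "x \<in> carrier M \<Longrightarrow> \<one>\<^bsub>S\<^esub> x = x"
  by (simp add: End_ring_def)

lemma EndD:
  assumes "f \<in> E"
  shows "\<And>x. x \<in> carrier M \<Longrightarrow> f x \<in> carrier M"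
    and "\<And>x y. x \<in> carrier M \<Longrightarrow> y \<in> carrier M \<Longrightarrow> f (x \<oplus> y) = f x \<oplus> f y"
    and "\<And>a x. a \<in> carrier R \<Longrightarrow> x \<in> carrier M \<Longrightarrow> f (a \<odot>\<^bsub>M\<^esub> x) = a \<odot>\<^bsub>M\<^esub> f x"
    and "\<And>x. x \<notin> carrier M \<Longrightarrow> f x = undefined"
  using assms by (auto simp: End_carrier_def)

lemma EndI:
  assumes "\<And>x. x \<in> carrier M \<Longrightarrow> f x \<in> carrier M"
    and "\<And>x y. x \<in> carrier M \<Longrightarrow> y \<in> carrier M \<Longrightarrow> f (x \<oplus> y) = f x \<oplus> f y"
    and "\<And>a x. a \<in> carrier R \<Longrightarrow> x \<in> carrier M \<Longrightarrow> f (a \<odot>\<^bsub>M\<^esub> x) = a \<odot>\<^bsub>M\<^esub> f x"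
    and "\<And>x. x \<notin> carrier M \<Longrightarrow> f x = undefined"
  shows "f \<in> E"
  using assms by (auto simp: End_carrier_def)

lemma End_zero:
  assumes "f \<in> E" shows "f \<zero> = \<zero>"
proof -
  have "f \<zero> \<oplus> f \<zero> = f \<zero>"
    using EndD(2)[OF assms, of \<zero> \<zero>] by simp
  then show ?thesis using EndD(1)[OF assms] M.add.l_cancel_one by (metis M.zero_closed)
qed

lemma End_neg:
  assumes "f \<in> E" "x \<in> carrier M" shows "f (\<ominus> x) = \<ominus> f x"
proof -
  have "f (\<ominus> x) \<oplus> f x = \<zero>"
    using EndD(2)[OF assms(1), of "\<ominus> x" x] assms End_zero[OF assms(1)] by (simp add: M.l_neg)
  then show ?thesis using M.minus_equality EndD(1)[OF assms(1)] assms by auto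
qed

lemma smult_zero: "a \<in> carrier R \<Longrightarrow> a \<odot>\<^bsub>M\<^esub> \<zero> = \<zero>"
  by (metis M.add.l_cancel_one M.r_zero M.zero_closed smult_closed smult_r_distr)

lemma smult_neg:
  assumes "a \<in> carrier R" "x \<in> carrier M"
  shows "a \<odot>\<^bsub>M\<^esub> (\<ominus> x) = \<ominus> (a \<odot>\<^bsub>M\<^esub> x)"
proof -
  have "a \<odot>\<^bsub>M\<^esub> (\<ominus> x) \<oplus> a \<odot>\<^bsub>M\<^esub> x = \<zero>"
    using assms by (simp add: smult_r_distr[symmetric] M.l_neg smult_zero)
  then show ?thesis using assms by (simp add: M.minus_equality smult_closed)
qed

lemma End_neg_closed: "a \<in> E \<Longrightarrow> (\<lambda>x\<in>carrier M. \<ominus> a x) \<in> E"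
  by (rule EndI) (auto simp: EndD M.minus_add smult_closed smult_neg)

lemma End_operations_closed:
  "\<And>a b. a \<in> E \<Longrightarrow> b \<in> E \<Longrightarrow> (\<lambda>x\<in>carrier M. b (a x)) \<in> E"
  "\<And>a b. a \<in> E \<Longrightarrow> b \<in> E \<Longrightarrow> (\<lambda>x\<in>carrier M. a x \<oplus> b x) \<in> E"
  "\<And>a. a \<in> E \<Longrightarrow> (\<lambda>x\<in>carrier M. \<ominus> a x) \<in> E"
  "(\<lambda>x\<in>carrier M. x) \<in> E" "(\<lambda>x\<in>carrier M. \<zero>) \<in> E"
  by (auto intro!: EndI End_neg_closed simp: EndD smult_closed smult_r_distr smult_zero M.a_ac)

lemma ring_End_ring: "ring S"
proof (rule ringI)
  note closed = End_operations_closed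
  show "abelian_group S"
  proof (rule abelian_groupI)
    fix x y z assume xyz: "x \<in> carrier S" "y \<in> carrier S" "z \<in> carrier S"
    show "x \<oplus>\<^bsub>S\<^esub> y \<in> carrier S" using xyz closed by (simp add: End_ring_def)
    show "x \<oplus>\<^bsub>S\<^esub> y \<oplus>\<^bsub>S\<^esub> z = x \<oplus>\<^bsub>S\<^esub> (y \<oplus>\<^bsub>S\<^esub> z)"
      using xyz by (intro ext) (auto simp: End_ring_def EndD M.a_assoc)
    show "x \<oplus>\<^bsub>S\<^esub> y = y \<oplus>\<^bsub>S\<^esub> x"
      using xyz by (intro ext) (auto simp: End_ring_def EndD M.a_comm)
    show "\<zero>\<^bsub>S\<^esub> \<oplus>\<^bsub>S\<^esub> x = x"
      using xyz by (intro ext) (auto simp: End_ring_def EndD)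
    show "\<exists>y\<in>carrier S. y \<oplus>\<^bsub>S\<^esub> x = \<zero>\<^bsub>S\<^esub>"
      using xyz closed by (intro bexI[of _ "\<lambda>v\<in>carrier M. \<ominus> x v"])
        (auto simp: End_ring_def EndD M.l_neg intro!: ext)
  qed (use closed in \<open>simp add: End_ring_def\<close>)
  show "monoid S"
  proof (rule monoidI)
    fix x y z assume xyz: "x \<in> carrier S" "y \<in> carrier S" "z \<in> carrier S"
    show "x \<otimes>\<^bsub>S\<^esub> y \<in> carrier S" using xyz closed by (simp add: End_ring_def)
    show "x \<otimes>\<^bsub>S\<^esub> y \<otimes>\<^bsub>S\<^esub> z = x \<otimes>\<^bsub>S\<^esub> (y \<otimes>\<^bsub>S\<^esub> z)"
      using xyz by (intro ext) (auto simp: End_ring_def EndD)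
    show "\<one>\<^bsub>S\<^esub> \<otimes>\<^bsub>S\<^esub> x = x" "x \<otimes>\<^bsub>S\<^esub> \<one>\<^bsub>S\<^esub> = x"
      using xyz by (auto intro!: ext simp: End_ring_def EndD)
  qed (use closed in \<open>simp add: End_ring_def\<close>)
  fix x y z assume xyz: "x \<in> carrier S" "y \<in> carrier S" "z \<in> carrier S"
  show "(x \<oplus>\<^bsub>S\<^esub> y) \<otimes>\<^bsub>S\<^esub> z = x \<otimes>\<^bsub>S\<^esub> z \<oplus>\<^bsub>S\<^esub> y \<otimes>\<^bsub>S\<^esub> z"
    "z \<otimes>\<^bsub>S\<^esub> (x \<oplus>\<^bsub>S\<^esub> y) = z \<otimes>\<^bsub>S\<^esub> x \<oplus>\<^bsub>S\<^esub> z \<otimes>\<^bsub>S\<^esub> y"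
    using xyz by (auto intro!: ext simp: End_ring_def EndD)
qed

end

sublocale left_module \<subseteq> End: ring "End_ring R M"
  by (rule ring_End_ring)

context left_module
begin

lemmas End_closed [simp] =
  End.one_closed[simplified] End.m_closed[simplified] End.minus_closed[simplified]

lemma End_neg_apply [simp]:
  assumes "a \<in> E" "x \<in> carrier M"
  shows "(\<ominus>\<^bsub>S\<^esub> a) x = \<ominus> a x"
proof -
  have "\<ominus>\<^bsub>S\<^esub> a = (\<lambda>v\<in>carrier M. \<ominus> a v)"
    using assms by (intro End.minus_equality)
      (auto simp: End_ring_def EndD M.l_neg intro!: ext End_neg_closed)
  then show ?thesis using assms by simp
qed

lemma End_minus_apply [simp]:
  "a \<in> E \<Longrightarrow> b \<in> E \<Longrightarrow> x \<in> carrier M \<Longrightarrow> (a \<ominus>\<^bsub>S\<^esub> b) x = a x \<ominus> b x"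
  by (simp add: End.minus_eq M.minus_eq)

lemma submoduleI':
  assumes "H \<subseteq> carrier M" "\<zero> \<in> H" "\<And>a. a \<in> H \<Longrightarrow> \<ominus> a \<in> H"
    "\<And>a b. a \<in> H \<Longrightarrow> b \<in> H \<Longrightarrow> a \<oplus> b \<in> H"
    "\<And>a x. a \<in> carrier R \<Longrightarrow> x \<in> H \<Longrightarrow> a \<odot>\<^bsub>M\<^esub> x \<in> H"
  shows "submodule H R M"
proof (intro submodule.intro subgroup.intro submodule_axioms.intro)
  show "inv\<^bsub>add_monoid M\<^esub> x \<in> H" if "x \<in> H" for x
    using assms(3)[OF that] unfolding a_inv_def .
qed (use assms in auto)

lemma submoduleD:
  assumes "submodule H R M"
  shows "H \<subseteq> carrier M" "\<zero> \<in> H" "\<And>a. a \<in> H \<Longrightarrow> \<ominus> a \<in> H"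
    "\<And>a b. a \<in> H \<Longrightarrow> b \<in> H \<Longrightarrow> a \<oplus> b \<in> H"
    "\<And>a x. a \<in> carrier R \<Longrightarrow> x \<in> H \<Longrightarrow> a \<odot>\<^bsub>M\<^esub> x \<in> H"
proof -
  interpret H: subgroup H "add_monoid M" using assms submodule.axioms(1) by blast
  show "H \<subseteq> carrier M" "\<zero> \<in> H" "\<And>a b. a \<in> H \<Longrightarrow> b \<in> H \<Longrightarrow> a \<oplus> b \<in> H"
    using H.subset H.one_closed H.m_closed by auto
  show "\<And>a. a \<in> H \<Longrightarrow> \<ominus> a \<in> H" unfolding a_inv_def by (rule H.m_inv_closed)
  show "\<And>a x. a \<in> carrier R \<Longrightarrow> x \<in> H \<Longrightarrow> a \<odot>\<^bsub>M\<^esub> x \<in> H"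
    by (rule submodule.smult_closed[OF assms])
qed

lemma submodule_Int: "submodule N R M \<Longrightarrow> submodule L R M \<Longrightarrow> submodule (N \<inter> L) R M"
  by (rule submoduleI') (auto dest: submoduleD)

lemma submodule_image:
  assumes "f \<in> E" "submodule N R M"
  shows "submodule (f ` N) R M"
proof (rule submoduleI')
  note N = submoduleD[OF assms(2)]
  show "f ` N \<subseteq> carrier M" using N(1) EndD(1)[OF assms(1)] by auto
  show "\<zero> \<in> f ` N" using N(2) End_zero[OF assms(1)] by force
  show "\<ominus> a \<in> f ` N" if a: "a \<in> f ` N" for a
  proof -
    obtain y where "y \<in> N" "a = f y" using a by blast
    then show ?thesis using N(1,3) End_neg[OF assms(1)] by (intro rev_image_eqI[of "\<ominus> y"]) auto
  qed
  show "a \<oplus> b \<in> f ` N" if ab: "a \<in> f ` N" "b \<in> f ` N" for a b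
  proof -
    obtain y z where "y \<in> N" "a = f y" "z \<in> N" "b = f z" using ab by blast
    then show ?thesis using N(4) subsetD[OF N(1)] EndD(2)[OF assms(1)] by (intro rev_image_eqI[of "y \<oplus> z"]) auto
  qed
  show "r \<odot>\<^bsub>M\<^esub> a \<in> f ` N" if r: "r \<in> carrier R" and a: "a \<in> f ` N" for r a
  proof -
    obtain y where "y \<in> N" "a = f y" using a by blast
    then show ?thesis
      using r N(1,5) EndD(3)[OF assms(1)] by (intro rev_image_eqI[of "r \<odot>\<^bsub>M\<^esub> y"]) auto
  qed
qed

lemma submodule_range: "f \<in> E \<Longrightarrow> submodule (f ` carrier M) R M"
  by (rule submodule_image) (auto intro: submoduleI' smult_closed)

lemma submodule_vimage:
  assumes "f \<in> E" "submodule K R M"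
  shows "submodule {x \<in> carrier M. f x \<in> K} R M"
  using submoduleD[OF assms(2)]
  by (intro submoduleI') (auto simp: End_zero End_neg EndD assms(1) smult_closed)

lemma sum_sub_subset: "N \<subseteq> carrier M \<Longrightarrow> L \<subseteq> carrier M \<Longrightarrow> sum_sub M N L \<subseteq> carrier M"
  by (auto simp: sum_sub_def)

lemma small_in_mono:
  assumes "small_in R M K" "submodule N R M" "N \<subseteq> K"
  shows "small_in R M N"
  unfolding small_in_def
proof (intro conjI allI impI assms(2))
  fix L assume L: "submodule L R M \<and> L \<noteq> carrier M"
  have "sum_sub M N L \<subseteq> sum_sub M K L" using assms(3) by (auto simp: sum_sub_def)
  moreover have "sum_sub M K L \<subseteq> carrier M"
    using assms(1) L by (intro sum_sub_subset) (auto simp: small_in_def dest: submoduleD(1))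
  moreover have "sum_sub M K L \<noteq> carrier M" using assms(1) L by (simp add: small_in_def)
  ultimately show "sum_sub M N L \<noteq> carrier M" by auto
qed

text \<open>If r N + K = M then N + r\<inverse>(K) = M, so smallness of N forces r\<inverse>(K) = M.\<close>
lemma small_in_image:
  assumes small: "small_in R M N" and r: "r \<in> E"
  shows "small_in R M (r ` N)"
  unfolding small_in_def
proof (intro conjI allI impI notI)
  have N: "submodule N R M" using small by (simp add: small_in_def)
  then show "submodule (r ` N) R M" using submodule_image[OF r] by blast
  fix K assume K: "submodule K R M \<and> K \<noteq> carrier M"
    and sum: "sum_sub M (r ` N) K = carrier M"
  let ?K' = "{x \<in> carrier M. r x \<in> K}"
  have "carrier M \<subseteq> sum_sub M N ?K'"
  proof
    fix x assume x: "x \<in> carrier M"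
    then have "r x \<in> sum_sub M (r ` N) K" using sum EndD(1)[OF r] by auto
    then obtain n k where nk: "n \<in> N" "k \<in> K" "r x = r n \<oplus> k" by (auto simp: sum_sub_def)
    have n: "n \<in> carrier M" and k: "k \<in> carrier M"
      using nk submoduleD(1) N K by auto
    have "r (x \<ominus> n) = k"
      using nk(3) n k x EndD[OF r]
      by (simp add: M.minus_eq End_neg[OF r] M.minus_eq_iff_eq_add[symmetric, of _ "r n"] M.a_comm)
    moreover have "x = n \<oplus> (x \<ominus> n)" using x n by (simp add: M.add_minus_cancel_left)
    ultimately show "x \<in> sum_sub M N ?K'"
      unfolding sum_sub_def using nk x n by force
  qed
  moreover have "sum_sub M N ?K' \<subseteq> carrier M"
    using submoduleD(1)[OF N] by (intro sum_sub_subset) auto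
  ultimately have "sum_sub M N ?K' = carrier M" by blast
  then have "?K' = carrier M"
    using small submodule_vimage[OF r] K unfolding small_in_def by blast
  then have "r ` N \<subseteq> K" using submoduleD(1)[OF N] by auto
  then have "sum_sub M (r ` N) K \<subseteq> K"
    using K submoduleD(4) unfolding sum_sub_def by blast
  then show False using sum K submoduleD(1) by blast
qed

lemma semi_projective_factor:
  assumes "semi_projective R M" "f \<in> E" "g \<in> Hom_into R M (f ` carrier M)"
  shows "\<exists>s\<in>E. g = s \<otimes>\<^bsub>S\<^esub> f"
  using assms unfolding semi_projective_def by blast

lemma surj_End_left_invertible:
  assumes "semi_projective R M" "f \<in> E" "f ` carrier M = carrier M"
  shows "\<exists>v\<in>E. v \<otimes>\<^bsub>S\<^esub> f = \<one>\<^bsub>S\<^esub>"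
proof -
  have "\<one>\<^bsub>S\<^esub> \<in> Hom_into R M (f ` carrier M)"
    using assms(3) by (auto simp: Hom_into_def)
  then show ?thesis using semi_projective_factor[OF assms(1,2)] by force
qed

lemma one_split_through_range:
  assumes sp: "semi_projective R M" and pp: "pi_projective R M"
    and f: "f \<in> E" and L: "submodule L R M" and sum: "sum_sub M (f ` carrier M) L = carrier M"
  shows "\<exists>s\<in>E. \<exists>h\<in>Hom_into R M L. \<one>\<^bsub>S\<^esub> = s \<otimes>\<^bsub>S\<^esub> f \<oplus>\<^bsub>S\<^esub> h"
proof -
  have "E = {g \<oplus>\<^bsub>S\<^esub> h | g h. g \<in> Hom_into R M (f ` carrier M) \<and> h \<in> Hom_into R M L}"
    using pp L sum submodule_range[OF f] unfolding pi_projective_def by blast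
  then have "\<one>\<^bsub>S\<^esub> \<in> {g \<oplus>\<^bsub>S\<^esub> h | g h. g \<in> Hom_into R M (f ` carrier M) \<and> h \<in> Hom_into R M L}"
    using End.one_closed by simp
  then obtain g h where "g \<in> Hom_into R M (f ` carrier M)" "h \<in> Hom_into R M L"
    "\<one>\<^bsub>S\<^esub> = g \<oplus>\<^bsub>S\<^esub> h" by blast
  then show ?thesis using semi_projective_factor[OF sp f] by blast
qed

lemma small_range_imp_jacobson_radical:
  assumes sp: "semi_projective R M" and t: "t \<in> E" and small: "small_in R M (t ` carrier M)"
  shows "t \<in> jacobson_radical S"
proof -
  have "\<exists>v\<in>E. v \<otimes>\<^bsub>S\<^esub> (\<one>\<^bsub>S\<^esub> \<ominus>\<^bsub>S\<^esub> u \<otimes>\<^bsub>S\<^esub> t) = \<one>\<^bsub>S\<^esub>" if u: "u \<in> E" for u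
  proof -
    define i where "i = \<one>\<^bsub>S\<^esub> \<ominus>\<^bsub>S\<^esub> u \<otimes>\<^bsub>S\<^esub> t"
    have i: "i \<in> E" using u t by (simp add: i_def)
    have "carrier M \<subseteq> sum_sub M (t ` carrier M) (i ` carrier M)"
    proof
      fix x assume x: "x \<in> carrier M"
      have "i x = x \<ominus> t (u x)" using x u t by (simp add: i_def)
      then have "x = t (u x) \<oplus> i x"
        using x u t by (simp add: M.add_minus_cancel_left EndD)
      then show "x \<in> sum_sub M (t ` carrier M) (i ` carrier M)"
        unfolding sum_sub_def using x EndD(1)[OF u] by blast
    qed
    moreover have "sum_sub M (t ` carrier M) (i ` carrier M) \<subseteq> carrier M"
      using t i by (intro sum_sub_subset) (auto simp: EndD)
    ultimately have "i ` carrier M = carrier M"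
      using small submodule_range[OF i] unfolding small_in_def by blast
    then show ?thesis using surj_End_left_invertible[OF sp i] by (simp add: i_def)
  qed
  then show ?thesis using t by (simp add: End.jacobson_radical_iff)
qed

lemma jacobson_radical_imp_small_range:
  assumes sp: "semi_projective R M" and pp: "pi_projective R M"
    and tJ: "t \<in> jacobson_radical S"
  shows "small_in R M (t ` carrier M)"
  unfolding small_in_def
proof (intro conjI allI impI notI)
  have t: "t \<in> E" using tJ by (simp add: End.jacobson_radical_iff)
  then show "submodule (t ` carrier M) R M" by (rule submodule_range)
  fix L assume L: "submodule L R M \<and> L \<noteq> carrier M"
    and sum: "sum_sub M (t ` carrier M) L = carrier M"
  obtain s h where s: "s \<in> E" and h: "h \<in> Hom_into R M L"
    and one: "\<one>\<^bsub>S\<^esub> = s \<otimes>\<^bsub>S\<^esub> t \<oplus>\<^bsub>S\<^esub> h"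
    using one_split_through_range[OF sp pp t _ sum] L by blast
  have hE: "h \<in> E" and hL: "h ` carrier M \<subseteq> L" using h by (auto simp: Hom_into_def)
  have "h = \<one>\<^bsub>S\<^esub> \<ominus>\<^bsub>S\<^esub> s \<otimes>\<^bsub>S\<^esub> t"
    using s t hE unfolding one carrier_End_ring[symmetric] by algebra
  then obtain v where v: "v \<in> E" "v \<otimes>\<^bsub>S\<^esub> h = \<one>\<^bsub>S\<^esub>"
    using tJ s by (auto simp: End.jacobson_radical_iff)
  have "x = h (v x)" if "x \<in> carrier M" for x
    using End_mult_apply[OF that, of v h] v(2) that by simp
  then have "carrier M \<subseteq> L" using hL EndD(1)[OF v(1)] by blast
  then show False using L submoduleD(1) by blast
qed

lemma jacobson_radical_End_iff:
  assumes "semi_projective R M" "pi_projective R M"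
  shows "t \<in> jacobson_radical S \<longleftrightarrow> t \<in> E \<and> small_in R M (t ` carrier M)"
  using assms jacobson_radical_imp_small_range small_range_imp_jacobson_radical
  by (auto simp: End.jacobson_radical_iff)

lemma ideal_jacobson_radical_End:
  assumes sp: "semi_projective R M" and pp: "pi_projective R M"
  shows "ideal (jacobson_radical S) S"
proof (rule idealI[OF ring_End_ring])
  note J = End.left_ideal_jacobson_radical
  show "subgroup (jacobson_radical S) (add_monoid S)"
    using J unfolding left_ideal_def additive_subgroup_def by blast
  show "x \<otimes>\<^bsub>S\<^esub> a \<in> jacobson_radical S" if "a \<in> jacobson_radical S" "x \<in> carrier S" for a x
    using J that unfolding left_ideal_def by blast
  show "a \<otimes>\<^bsub>S\<^esub> x \<in> jacobson_radical S" if a: "a \<in> jacobson_radical S" and x: "x \<in> carrier S" for a x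
  proof -
    have "(a \<otimes>\<^bsub>S\<^esub> x) ` carrier M = x ` a ` carrier M" by (auto simp: image_image)
    then show ?thesis
      using a x small_in_image jacobson_radical_End_iff[OF sp pp] by simp
  qed
qed

lemma range_mult_subset_of_one_split:
  assumes f: "f \<in> E" and s: "s \<in> E" and h: "h \<in> E"
    and one: "\<one>\<^bsub>S\<^esub> = s \<otimes>\<^bsub>S\<^esub> f \<oplus>\<^bsub>S\<^esub> h"
  shows "(f \<otimes>\<^bsub>S\<^esub> h) ` carrier M \<subseteq> f ` carrier M"
proof
  fix z assume "z \<in> (f \<otimes>\<^bsub>S\<^esub> h) ` carrier M"
  then obtain x where x: "x \<in> carrier M" and z: "z = h (f x)" by auto
  let ?y = "f x"
  have y: "?y \<in> carrier M" using EndD(1)[OF f x] .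
  have "?y = f (s ?y) \<oplus> h ?y"
    using End_mult_apply[OF y] End_add_apply[OF y] End_one_apply[OF y] one by metis
  then have "h ?y = ?y \<ominus> f (s ?y)"
    using y EndD(1)[OF f] EndD(1)[OF s] EndD(1)[OF h] M.a_comm
    by (metis M.minus_eq_iff_eq_add)
  then show "z \<in> f ` carrier M"
    using z x y EndD(1)[OF s] submoduleD(3,4)[OF submodule_range[OF f]] by (simp add: M.minus_eq)
qed

lemma weak_supplement_imp_quasi_inverse:
  assumes sp: "semi_projective R M" and pp: "pi_projective R M"
    and f: "f \<in> E" and L: "weak_supplement R M L (f ` carrier M)"
  shows "\<exists>s\<in>E. f \<otimes>\<^bsub>S\<^esub> s \<otimes>\<^bsub>S\<^esub> f \<ominus>\<^bsub>S\<^esub> f \<in> jacobson_radical S"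
proof -
  interpret J: ideal "jacobson_radical S" S
    by (rule ideal_jacobson_radical_End[OF sp pp])
  have Lsub: "submodule L R M" and sum: "sum_sub M (f ` carrier M) L = carrier M"
    and small: "small_in R M (f ` carrier M \<inter> L)"
    using L unfolding weak_supplement_def by auto
  obtain s h where s: "s \<in> E" and h: "h \<in> Hom_into R M L"
    and one: "\<one>\<^bsub>S\<^esub> = s \<otimes>\<^bsub>S\<^esub> f \<oplus>\<^bsub>S\<^esub> h"
    using one_split_through_range[OF sp pp f Lsub sum] by blast
  have hE: "h \<in> E" and hL: "h ` carrier M \<subseteq> L" using h by (auto simp: Hom_into_def)
  have "(f \<otimes>\<^bsub>S\<^esub> h) ` carrier M \<subseteq> f ` carrier M \<inter> L"
    using range_mult_subset_of_one_split[OF f s hE one] hL EndD(1)[OF f] by auto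
  moreover have "f \<otimes>\<^bsub>S\<^esub> h \<in> E" using f hE by simp
  ultimately have "small_in R M ((f \<otimes>\<^bsub>S\<^esub> h) ` carrier M)"
    using small_in_mono[OF small submodule_range] by blast
  then have "f \<otimes>\<^bsub>S\<^esub> h \<in> jacobson_radical S"
    using jacobson_radical_End_iff[OF sp pp] f hE by simp
  moreover have "f \<otimes>\<^bsub>S\<^esub> s \<otimes>\<^bsub>S\<^esub> f \<ominus>\<^bsub>S\<^esub> f = \<ominus>\<^bsub>S\<^esub> (f \<otimes>\<^bsub>S\<^esub> h)"
  proof -
    have "f \<otimes>\<^bsub>S\<^esub> s \<otimes>\<^bsub>S\<^esub> f \<ominus>\<^bsub>S\<^esub> f \<otimes>\<^bsub>S\<^esub> (s \<otimes>\<^bsub>S\<^esub> f \<oplus>\<^bsub>S\<^esub> h) = \<ominus>\<^bsub>S\<^esub> (f \<otimes>\<^bsub>S\<^esub> h)"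
      using f s hE unfolding carrier_End_ring[symmetric] by algebra
    then show ?thesis using f by (simp add: one[symmetric])
  qed
  ultimately have "f \<otimes>\<^bsub>S\<^esub> s \<otimes>\<^bsub>S\<^esub> f \<ominus>\<^bsub>S\<^esub> f \<in> jacobson_radical S"
    by (simp add: J.a_inv_closed)
  then show ?thesis using s by blast
qed

lemma range_sum_range_one_minus:
  assumes f: "f \<in> E" and g: "g \<in> E"
  shows "sum_sub M (f ` carrier M) ((\<one>\<^bsub>S\<^esub> \<ominus>\<^bsub>S\<^esub> g \<otimes>\<^bsub>S\<^esub> f) ` carrier M) = carrier M"
    (is "sum_sub M _ (?w ` carrier M) = _")
proof
  show "sum_sub M (f ` carrier M) (?w ` carrier M) \<subseteq> carrier M"
    using f g by (intro sum_sub_subset) (auto simp: EndD)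
  show "carrier M \<subseteq> sum_sub M (f ` carrier M) (?w ` carrier M)"
  proof
    fix x assume x: "x \<in> carrier M"
    have "x = f (g x) \<oplus> ?w x"
      using x f g by (simp add: M.add_minus_cancel_left EndD)
    then show "x \<in> sum_sub M (f ` carrier M) (?w ` carrier M)"
      unfolding sum_sub_def using x EndD(1)[OF g] by blast
  qed
qed

lemma range_Int_range_one_minus_subset:
  assumes f: "f \<in> E" and g: "g \<in> E"
  shows "f ` carrier M \<inter> (\<one>\<^bsub>S\<^esub> \<ominus>\<^bsub>S\<^esub> g \<otimes>\<^bsub>S\<^esub> f) ` carrier M
    \<subseteq> (f \<otimes>\<^bsub>S\<^esub> g \<otimes>\<^bsub>S\<^esub> f \<ominus>\<^bsub>S\<^esub> f) ` carrier M"
proof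
  define d where "d = f \<otimes>\<^bsub>S\<^esub> g \<otimes>\<^bsub>S\<^esub> f \<ominus>\<^bsub>S\<^esub> f"
  define w where "w = \<one>\<^bsub>S\<^esub> \<ominus>\<^bsub>S\<^esub> g \<otimes>\<^bsub>S\<^esub> f"
  have d: "d \<in> E" and w: "w \<in> E" using f g by (simp_all add: d_def w_def)
  fix y assume "y \<in> f ` carrier M \<inter> w ` carrier M"
  then obtain x z where x: "x \<in> carrier M" "y = f x" and z: "z \<in> carrier M" "y = w z" by blast
  text \<open>Evaluate g f at y in two ways.\<close>
  have "w \<otimes>\<^bsub>S\<^esub> (g \<otimes>\<^bsub>S\<^esub> f) = \<ominus>\<^bsub>S\<^esub> (g \<otimes>\<^bsub>S\<^esub> d)"
    using f g unfolding w_def d_def carrier_End_ring[symmetric] by algebra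
  then have "f (g y) = \<ominus> d (g z)"
    using End_mult_apply[OF z(1), of w "g \<otimes>\<^bsub>S\<^esub> f"] z f g d w EndD(1)[OF g] EndD(1)[OF w]
    by simp
  moreover have "f \<otimes>\<^bsub>S\<^esub> (g \<otimes>\<^bsub>S\<^esub> f) = f \<oplus>\<^bsub>S\<^esub> d"
    using f g unfolding d_def carrier_End_ring[symmetric] by algebra
  then have "f (g y) = y \<oplus> d x"
    using End_mult_apply[OF x(1), of f "g \<otimes>\<^bsub>S\<^esub> f"] x f g d EndD(1)[OF f] by simp
  ultimately have "y = \<ominus> d (g z) \<ominus> d x"
    using x z EndD(1)[OF d] EndD(1)[OF g] EndD(1)[OF f] by (simp add: M.add_minus_cancel_right)
  then show "y \<in> d ` carrier M"
    using submoduleD(3,4)[OF submodule_range[OF d]] x z EndD(1)[OF g] by (simp add: M.minus_eq)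
qed

lemma weak_supplement_of_quasi_inverse:
  assumes f: "f \<in> E" and g: "g \<in> E"
    and small: "small_in R M ((f \<otimes>\<^bsub>S\<^esub> g \<otimes>\<^bsub>S\<^esub> f \<ominus>\<^bsub>S\<^esub> f) ` carrier M)"
  shows "weak_supplement R M ((\<one>\<^bsub>S\<^esub> \<ominus>\<^bsub>S\<^esub> g \<otimes>\<^bsub>S\<^esub> f) ` carrier M) (f ` carrier M)"
proof -
  have w: "\<one>\<^bsub>S\<^esub> \<ominus>\<^bsub>S\<^esub> g \<otimes>\<^bsub>S\<^esub> f \<in> E" using f g by simp
  show ?thesis
    unfolding weak_supplement_def
  proof (intro conjI)
    show "submodule ((\<one>\<^bsub>S\<^esub> \<ominus>\<^bsub>S\<^esub> g \<otimes>\<^bsub>S\<^esub> f) ` carrier M) R M"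
      by (rule submodule_range[OF w])
    show "sum_sub M (f ` carrier M) ((\<one>\<^bsub>S\<^esub> \<ominus>\<^bsub>S\<^esub> g \<otimes>\<^bsub>S\<^esub> f) ` carrier M) = carrier M"
      by (rule range_sum_range_one_minus[OF f g])
    show "small_in R M (f ` carrier M \<inter> (\<one>\<^bsub>S\<^esub> \<ominus>\<^bsub>S\<^esub> g \<otimes>\<^bsub>S\<^esub> f) ` carrier M)"
      by (rule small_in_mono[OF small submodule_Int[OF submodule_range[OF f] submodule_range[OF w]]
            range_Int_range_one_minus_subset[OF f g]])
  qed
qed

end

theorem mainTheorem3:
  fixes R :: "('a, 'c) ring_scheme" and M :: "('a, 'b, 'd) module_scheme"
  assumes "left_module R M"
    and "semi_projective R M"
    and "pi_projective R M"
  shows "von_neumann_regular (End_ring R M Quot jacobson_radical (End_ring R M))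
     \<longleftrightarrow> (\<forall>f\<in>End_carrier R M. \<exists>L. weak_supplement R M L (f ` carrier M))"
proof -
  interpret left_module R M by fact
  note J_iff = jacobson_radical_End_iff[OF assms(2,3)]
  interpret J: ideal "jacobson_radical S" S
    by (rule ideal_jacobson_radical_End[OF assms(2,3)])
  have "von_neumann_regular (S Quot jacobson_radical S) \<longleftrightarrow>
      (\<forall>f\<in>E. \<exists>g\<in>E. f \<otimes>\<^bsub>S\<^esub> g \<otimes>\<^bsub>S\<^esub> f \<ominus>\<^bsub>S\<^esub> f \<in> jacobson_radical S)"
    using J.von_neumann_regular_Quot_iff by simp
  also have "\<dots> \<longleftrightarrow> (\<forall>f\<in>E. \<exists>L. weak_supplement R M L (f ` carrier M))"
  proof (intro ball_cong[OF refl] iffI)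
    fix f assume f: "f \<in> E"
    show "\<exists>g\<in>E. f \<otimes>\<^bsub>S\<^esub> g \<otimes>\<^bsub>S\<^esub> f \<ominus>\<^bsub>S\<^esub> f \<in> jacobson_radical S
      \<Longrightarrow> \<exists>L. weak_supplement R M L (f ` carrier M)"
      using weak_supplement_of_quasi_inverse f J_iff by blast
    show "\<exists>L. weak_supplement R M L (f ` carrier M)
      \<Longrightarrow> \<exists>g\<in>E. f \<otimes>\<^bsub>S\<^esub> g \<otimes>\<^bsub>S\<^esub> f \<ominus>\<^bsub>S\<^esub> f \<in> jacobson_radical S"
      using weak_supplement_imp_quasi_inverse[OF assms(2,3) f] by blast
  qed
  finally show ?thesis .
qed

end
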